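(* Let ${\mathbf{x}}_1,\dots,{\mathbf{x}}_T\in\mathbb{R}^N$ with ${\mathbf{C}}_{xx}:=\frac1T\sum_{t=1}^T{\mathbf{x}}_t{\mathbf{x}}_t^\top$ positive definite, and let ${\mathbf{W}}=[{\mathbf{w}}_1,\dots,{\mathbf{w}}_K]\in\mathbb{R}^{N\times K}$ have unit-norm columns with $\operatorname{span}\{{\mathbf{w}}_1{\mathbf{w}}_1^\top,\dots,{\mathbf{w}}_K{\mathbf{w}}_K^\top\}={\mathbb{S}}^N$. For ${\mathbf{y}}_1,\dots,{\mathbf{y}}_T\in\mathbb{R}^N$ and ${\mathbf{g}}\in\mathbb{R}^K$ define $$L({\mathbf{y}}_1,\dots,{\mathbf{y}}_T,{\mathbf{g}}):=\frac1T\sum_{t=1}^T\Big(\|{\mathbf{x}}_t-{\mathbf{y}}_t\|_2^2+\sum_{i=1}^K g_i\big\{({\mathbf{w}}_i^\top{\mathbf{y}}_t)^2-1\big\}\Big).$$ Let ${\mathbf{y}}_t^\ast:={\mathbf{C}}_{xx}^{-1/2}{\mathbf{x}}_t$ and let ${\mathbf{g}}^\ast\in\mathbb{R}^K$ be any vector with ${\mathbf{I}}_N+{\mathbf{W}}\operatorname{diag}({\mathbf{g}}^\ast){\mathbf{W}}^\top={\mathbf{C}}_{xx}^{1/2}$ (such a vector exists). Then $({\mathbf{y}}_1^\ast,\dots,{\mathbf{y}}_T^\ast,{\mathbf{g}}^\ast)$ is a saddle point of $L$: $$L({\mathbf{y}}^\ast_{1:T},{\mathbf{g}})\le L({\mathbf{y}}^\ast_{1:T},{\mathbf{g}}^\ast)\le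 L({\mathbf{y}}_{1:T},{\mathbf{g}}^\ast)\quad\text{for all }{\mathbf{y}}_1,\dots,{\mathbf{y}}_T\in\mathbb{R}^N,\ {\mathbf{g}}\in\mathbb{R}^K,$$ and consequently $$\min_{{\mathbf{y}}_1,\dots,{\mathbf{y}}_T}\max_{{\mathbf{g}}}L=\max_{{\mathbf{g}}}\min_{{\mathbf{y}}_1,\dots,{\mathbf{y}}_T}L=L({\mathbf{y}}^\ast_{1:T},{\mathbf{g}}^\ast).$$ Moreover, ${\mathbf{y}}_{1:T}\mapsto L({\mathbf{y}}_{1:T},{\mathbf{g}}^\ast)$ is strictly convex with unique minimizer ${\mathbf{y}}^\ast_{1:T}$.
   Context: ${\mathbb{S}}^N$ is the space of $N\times N$ real symmetric matrices; $\operatorname{diag}({\mathbf{g}})$ is the diagonal matrix with diagonal ${\mathbf{g}}$; ${\mathbf{C}}_{xx}^{1/2}$ is the symmetric positive definite square root and ${\mathbf{C}}_{xx}^{-1/2}$ its inverse. *)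

theory Defs
  imports "HOL-Analysis.Analysis"
begin

definition sym_mat :: "real^'n^'n \<Rightarrow> bool" where
  "sym_mat A \<longleftrightarrow> transpose A = A"

definition posdef :: "real^'n^'n \<Rightarrow> bool" where
  "posdef A \<longleftrightarrow> sym_mat A \<and> (\<forall>v. v \<noteq> 0 \<longrightarrow> v \<bullet> (A *v v) > 0)"

text \<open>The symmetric positive definite square root (unique when A is positive definite).\<close>
definition mat_sqrt :: "real^'n^'n \<Rightarrow> real^'n^'n" where
  "mat_sqrt A = (THE S. posdef S \<and> S ** S = A)"

definition outer :: "real^'n \<Rightarrow> real^'n^'n" where
  "outer v = (\<chi> i j. v$i * v$j)"

definition diag_mat :: "real^'k \<Rightarrow> real^'k^'k" where
  "diag_mat g = (\<chi> i j. if i = j then g$i else 0)"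

definition cov :: "real^'n^'t \<Rightarrow> real^'n^'n" where
  "cov x = (1 / real CARD('t)) *\<^sub>R (\<Sum>t\<in>UNIV. outer (x$t))"

definition lagr :: "real^'n^'t \<Rightarrow> real^'k^'n \<Rightarrow> real^'n^'t \<Rightarrow> real^'k \<Rightarrow> real" where
  "lagr x W y g = (1 / real CARD('t)) *
     (\<Sum>t\<in>UNIV. (norm (x$t - y$t))\<^sup>2 +
        (\<Sum>i\<in>UNIV. g$i * ((column i W \<bullet> y$t)\<^sup>2 - 1)))"

definition strictly_convex_on :: "'a::real_vector set \<Rightarrow> ('a \<Rightarrow> real) \<Rightarrow> bool" where
  "strictly_convex_on S f \<longleftrightarrow> convex S \<and>
    (\<forall>x\<in>S. \<forall>y\<in>S. x \<noteq> y \<longrightarrow> (\<forall>u. 0 < u \<and> u < 1 \<longrightarrow>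
       f (u *\<^sub>R x + (1 - u) *\<^sub>R y) < u * f x + (1 - u) * f y))"

end

theory Submission
  imports Defs
begin

text \<open>
  Since \<open>\<Sum>\<^sub>i g\<^sub>i (w\<^sub>i\<^sup>T y)\<^sup>2 = y\<^sup>T W diag(g) W\<^sup>T y\<close>, at any \<open>g\<close> with \<open>I + W diag(g) W\<^sup>T = S\<close> the
  Lagrangian is \<open>L(y, g) = (1/T) \<Sum>\<^sub>t (\<parallel>x\<^sub>t - y\<^sub>t\<parallel>\<^sup>2 + y\<^sub>t\<^sup>T (S - I) y\<^sub>t) - \<Sum>\<^sub>i g\<^sub>i\<close>. Completing the
  square around the points \<open>y\<^sup>*\<^sub>t\<close> with \<open>S y\<^sup>*\<^sub>t = x\<^sub>t\<close> writes \<open>L(\<cdot>, g)\<close> as a constant plus the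
  positive definite form \<open>(1/T) \<Sum>\<^sub>t (y\<^sub>t - y\<^sup>*\<^sub>t)\<^sup>T S (y\<^sub>t - y\<^sup>*\<^sub>t)\<close>, which gives strict convexity
  and the unique minimizer. For \<open>S = C\<^sub>x\<^sub>x\<^sup>1\<^sup>/\<^sup>2\<close> the points \<open>y\<^sup>*\<^sub>t = C\<^sub>x\<^sub>x\<^sup>-\<^sup>1\<^sup>/\<^sup>2 x\<^sub>t\<close> have identity
  covariance, so every constraint \<open>(1/T) \<Sum>\<^sub>t (w\<^sub>i\<^sup>T y\<^sup>*\<^sub>t)\<^sup>2 = 1\<close> holds and \<open>L(y\<^sup>*, g)\<close> does not
  depend on \<open>g\<close>. Hence \<open>(y\<^sup>*, g\<^sup>*)\<close> is a saddle point, and the minimax equalities follow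
  formally. A \<open>g\<^sup>*\<close> exists because \<open>C\<^sub>x\<^sub>x\<^sup>1\<^sup>/\<^sup>2 - I\<close> is symmetric, hence in the span of the
  \<open>w\<^sub>i w\<^sub>i\<^sup>T\<close>; the square root itself comes from the spectral theorem, obtained by maximizing
  the Rayleigh quotient on invariant subspaces.
\<close>

section \<open>Symmetric matrices and the spectral theorem\<close>

lemma sym_mat_iff_inner:
  "sym_mat (A::real^'n^'n) \<longleftrightarrow> (\<forall>u v. (A *v u) \<bullet> v = u \<bullet> (A *v v))"
proof -
  have "(A *v u) \<bullet> v = u \<bullet> (transpose A *v v)" for u v
    by (metis dot_lmul_matrix inner_commute transpose_matrix_vector)
  then show ?thesis
    unfolding sym_mat_def by (metis matrix_eq vector_eq_ldot)
qed

lemma sym_mat_inner: "sym_mat (A::real^'n^'n) \<Longrightarrow> (A *v u) \<bullet> v = u \<bullet> (A *v v)"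
  using sym_mat_iff_inner by blast

lemma sym_mat_diff: "sym_mat A \<Longrightarrow> sym_mat B \<Longrightarrow> sym_mat (A - B)"
  by (simp add: sym_mat_def transpose_def vec_eq_iff)

lemma sym_mat_mat: "sym_mat (mat c)"
  by (simp add: sym_mat_def)

lemma posdef_sym: "posdef S \<Longrightarrow> sym_mat S"
  by (simp add: posdef_def)

lemma posdef_nonneg: "posdef S \<Longrightarrow> 0 \<le> v \<bullet> (S *v v)"
  by (cases "v = 0") (auto simp: posdef_def less_imp_le)

lemma nonneg_quadratic_linear_coeff_eq_0:
  fixes a b :: real
  assumes "b \<ge> 0" and "\<And>t. 2 * t * a + t\<^sup>2 * b \<ge> 0"
  shows "a = 0"
proof (rule ccontr)
  assume "a \<noteq> 0"
  define t where "t = - a / (b + 1)"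
  have t: "t * (b + 1) = - a"
    using assms(1) by (simp add: t_def)
  have "(b + 1)\<^sup>2 * (2 * t * a + t\<^sup>2 * b) = 2 * a * (b + 1) * (t * (b + 1)) + (t * (b + 1))\<^sup>2 * b"
    by (simp add: algebra_simps power2_eq_square)
  also have "\<dots> = - (a\<^sup>2 * (b + 2))"
    unfolding t by (simp add: algebra_simps power2_eq_square)
  also have "\<dots> < 0"
    using \<open>a \<noteq> 0\<close> assms(1) by simp
  finally show False
    using assms(2)[of t] by (smt (verit) zero_le_mult_iff zero_le_power2)
qed

lemma sym_mat_nonneg_on_subspace_null:
  fixes M :: "real^'n^'n"
  assumes M: "sym_mat M" and V: "subspace V" "\<forall>u\<in>V. M *v u \<in> V"
    and nonneg: "\<forall>u\<in>V. 0 \<le> u \<bullet> (M *v u)" and v: "v \<in> V" "v \<bullet> (M *v v) = 0"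
  shows "M *v v = 0"
proof -
  let ?w = "M *v v"
  have wV: "?w \<in> V"
    using V v by blast
  have "2 * t * (?w \<bullet> ?w) + t\<^sup>2 * (?w \<bullet> (M *v ?w)) \<ge> 0" for t
  proof -
    have "v + t *\<^sub>R ?w \<in> V"
      using V(1) v(1) wV by (simp add: subspace_add subspace_scale)
    then have "0 \<le> (v + t *\<^sub>R ?w) \<bullet> (M *v (v + t *\<^sub>R ?w))"
      using nonneg by blast
    also have "\<dots> = v \<bullet> (M *v v) + t * (v \<bullet> (M *v ?w)) + t * (?w \<bullet> ?w) + t\<^sup>2 * (?w \<bullet> (M *v ?w))"
      by (simp add: matrix_vector_right_distrib matrix_vector_mult_scaleR inner_add_left
          inner_add_right power2_eq_square algebra_simps)
    also have "\<dots> = 2 * t * (?w \<bullet> ?w) + t\<^sup>2 * (?w \<bullet> (M *v ?w))"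
      using v(2) sym_mat_inner[OF M, of v ?w] by simp
    finally show ?thesis .
  qed
  then have "?w \<bullet> ?w = 0"
    using nonneg_quadratic_linear_coeff_eq_0 nonneg wV by blast
  then show ?thesis
    by simp
qed

lemma quadratic_form_max_on_subspace:
  fixes A :: "real^'n^'n"
  assumes V: "subspace V" "V \<noteq> {0}"
  shows "\<exists>v\<in>V. norm v = 1 \<and> (\<forall>u\<in>V. u \<bullet> (A *v u) \<le> (v \<bullet> (A *v v)) * (u \<bullet> u))"
proof -
  let ?K = "V \<inter> sphere 0 1"
  have "compact ?K"
    using V by (simp add: closed_subspace closed_Int_compact)
  moreover obtain w where w: "w \<in> V" "w \<noteq> 0"
    using V subspace_0 by blast
  then have "w /\<^sub>R norm w \<in> ?K"
    using V by (simp add: subspace_scale)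
  then have "?K \<noteq> {}" by blast
  moreover have "continuous_on ?K (\<lambda>v. v \<bullet> (A *v v))"
    by (intro continuous_intros linear_continuous_on matrix_vector_mul_linear bounded_linear_intros)
  ultimately obtain v where v: "v \<in> ?K" and max: "\<forall>y\<in>?K. y \<bullet> (A *v y) \<le> v \<bullet> (A *v v)"
    using continuous_attains_sup by blast
  have "u \<bullet> (A *v u) \<le> (v \<bullet> (A *v v)) * (u \<bullet> u)" if "u \<in> V" for u
  proof (cases "u = 0")
    case False
    then have "u /\<^sub>R norm u \<in> ?K"
      using that V by (simp add: subspace_scale)
    then have "(u /\<^sub>R norm u) \<bullet> (A *v (u /\<^sub>R norm u)) \<le> v \<bullet> (A *v v)"
      using max by blast
    then have "(u \<bullet> (A *v u)) / (norm u)\<^sup>2 \<le> v \<bullet> (A *v v)"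
      by (simp add: matrix_vector_mult_scaleR power2_eq_square divide_inverse
          mult.commute mult.left_commute)
    then show ?thesis
      using False by (simp add: divide_le_eq dot_square_norm)
  qed simp
  then show ?thesis
    using v by auto
qed

lemma sym_mat_unit_eigenvector:
  fixes A :: "real^'n^'n"
  assumes A: "sym_mat A" and V: "subspace V" "V \<noteq> {0}" and inv: "\<forall>v\<in>V. A *v v \<in> V"
  shows "\<exists>v\<in>V. norm v = 1 \<and> A *v v = (v \<bullet> (A *v v)) *\<^sub>R v"
proof -
  obtain v where vV: "v \<in> V" and nv: "norm v = 1"
    and Rayleigh: "\<forall>u\<in>V. u \<bullet> (A *v u) \<le> (v \<bullet> (A *v v)) * (u \<bullet> u)"
    using quadratic_form_max_on_subspace[OF V] by blast
  define l where "l = v \<bullet> (A *v v)"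
  have M: "(l *\<^sub>R mat 1 - A) *v u = l *\<^sub>R u - A *v u" for u
    by (simp add: matrix_vector_mult_diff_rdistrib scaleR_matrix_vector_assoc[symmetric])
  have "sym_mat (l *\<^sub>R mat 1 - A)"
    using A by (simp add: sym_mat_iff_inner M inner_diff_left inner_diff_right)
  moreover have "\<forall>u\<in>V. 0 \<le> u \<bullet> ((l *\<^sub>R mat 1 - A) *v u)"
    using Rayleigh unfolding M by (simp add: inner_diff_right l_def)
  moreover have "\<forall>u\<in>V. (l *\<^sub>R mat 1 - A) *v u \<in> V"
    using V(1) inv by (simp add: M subspace_diff subspace_scale)
  moreover have "v \<bullet> ((l *\<^sub>R mat 1 - A) *v v) = 0"
    unfolding M using nv by (simp add: inner_diff_right l_def norm_eq_1)
  ultimately have "(l *\<^sub>R mat 1 - A) *v v = 0"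
    using sym_mat_nonneg_on_subspace_null[OF _ V(1)] vV by blast
  then have "A *v v = l *\<^sub>R v"
    unfolding M by simp
  then show ?thesis
    using vV nv l_def by blast
qed

lemma sym_mat_orthogonal_complement_invariant:
  fixes A :: "real^'n^'n"
  assumes A: "sym_mat A" and inv: "\<forall>u\<in>V. A *v u \<in> V" and v: "A *v v = c *\<^sub>R v"
  shows "\<forall>u\<in>V \<inter> {u. v \<bullet> u = 0}. A *v u \<in> V \<inter> {u. v \<bullet> u = 0}"
proof
  fix u assume u: "u \<in> V \<inter> {u. v \<bullet> u = 0}"
  have "v \<bullet> (A *v u) = c * (v \<bullet> u)"
    using sym_mat_inner[OF A, of v u] v by simp
  then show "A *v u \<in> V \<inter> {u. v \<bullet> u = 0}"
    using u inv by auto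
qed

lemma span_insert_orthogonal_complement:
  fixes v :: "'a::real_inner"
  assumes V: "subspace V" and v: "v \<in> V" "v \<bullet> v = 1" and B: "span B = V \<inter> {u. v \<bullet> u = 0}"
  shows "span (insert v B) = V"
proof
  have "insert v B \<subseteq> V"
    using v B span_superset[of B] by blast
  then show "span (insert v B) \<subseteq> V"
    using span_minimal V by blast
  show "V \<subseteq> span (insert v B)"
  proof
    fix u assume u: "u \<in> V"
    have "u - (v \<bullet> u) *\<^sub>R v \<in> span B"
      using u v V B by (auto simp: subspace_diff subspace_scale inner_diff_right)
    then have "u - (v \<bullet> u) *\<^sub>R v \<in> span (insert v B)"
      using span_mono[of B "insert v B"] by auto
    then have "(u - (v \<bullet> u) *\<^sub>R v) + (v \<bullet> u) *\<^sub>R v \<in> span (insert v B)"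
      by (intro span_add) (simp_all add: span_base span_mul)
    then show "u \<in> span (insert v B)"
      by simp
  qed
qed

lemma sym_mat_eigenbasis_subspace:
  fixes A :: "real^'n^'n"
  assumes A: "sym_mat A"
  shows "subspace V \<Longrightarrow> \<forall>v\<in>V. A *v v \<in> V \<Longrightarrow>
    \<exists>B. B \<subseteq> V \<and> finite B \<and> pairwise orthogonal B \<and>
       (\<forall>b\<in>B. norm b = 1 \<and> A *v b = (b \<bullet> (A *v b)) *\<^sub>R b) \<and> span B = V"
proof (induction "dim V" arbitrary: V rule: less_induct)
  case less
  show ?case
  proof (cases "V = {0}")
    case True
    then show ?thesis by (intro exI[of _ "{}"]) auto
  next
    case False
    obtain v where vV: "v \<in> V" and nv: "norm v = 1" and Av: "A *v v = (v \<bullet> (A *v v)) *\<^sub>R v"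
      using sym_mat_unit_eigenvector[OF A less.prems(1) False less.prems(2)] by blast
    have vv: "v \<bullet> v = 1"
      using nv by (simp add: norm_eq_1)
    define V' where "V' = V \<inter> {u. v \<bullet> u = 0}"
    have V': "subspace V'"
      unfolding V'_def using subspace_orthogonal_to_vector[of v] less.prems(1)
      by (intro subspace_inter) (auto simp: orthogonal_def)
    have "v \<notin> V'"
      using vv by (simp add: V'_def)
    then have "V' \<subset> V"
      using vV unfolding V'_def by blast
    then have "dim V' < dim V"
      using V' less.prems(1) by (metis dim_psubset span_eq_iff)
    moreover have "\<forall>u\<in>V'. A *v u \<in> V'"
      unfolding V'_def by (rule sym_mat_orthogonal_complement_invariant[OF A less.prems(2) Av])
    ultimately obtain B' where B': "B' \<subseteq> V'" "finite B'" "pairwise orthogonal B'"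
        "\<forall>b\<in>B'. norm b = 1 \<and> A *v b = (b \<bullet> (A *v b)) *\<^sub>R b" "span B' = V'"
      using less.hyps[OF _ V'] by blast
    show ?thesis
    proof (intro exI[of _ "insert v B'"] conjI)
      show "insert v B' \<subseteq> V"
        using B'(1) vV by (auto simp: V'_def)
      show "finite (insert v B')"
        using B'(2) by simp
      show "pairwise orthogonal (insert v B')"
        using B'(3) B'(1) unfolding pairwise_insert
        by (auto simp: V'_def orthogonal_def inner_commute)
      show "\<forall>b\<in>insert v B'. norm b = 1 \<and> A *v b = (b \<bullet> (A *v b)) *\<^sub>R b"
        using B'(4) nv Av by auto
      show "span (insert v B') = V"
        using span_insert_orthogonal_complement[OF less.prems(1) vV vv] B'(5) V'_def by blast
    qed
  qed
qed

lemma sym_mat_eigenbasis: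
  fixes A :: "real^'n^'n"
  assumes "sym_mat A"
  obtains B where "finite B" "pairwise orthogonal B" "\<forall>b\<in>B. norm b = 1"
    "\<forall>b\<in>B. A *v b = (b \<bullet> (A *v b)) *\<^sub>R b" "\<forall>u. u = (\<Sum>b\<in>B. (u \<bullet> b) *\<^sub>R b)"
proof -
  obtain B where B: "finite B" "pairwise orthogonal B"
       "\<forall>b\<in>B. norm b = 1 \<and> A *v b = (b \<bullet> (A *v b)) *\<^sub>R b" "span B = UNIV"
    using sym_mat_eigenbasis_subspace[OF assms, of UNIV] by auto
  then show ?thesis
    using that orthonormal_basis_expand[OF B(2) _ _ B(1)] by auto
qed

lemma orthonormal_sum_inner:
  fixes B :: "(real^'n) set"
  assumes "finite B" "pairwise orthogonal B" "\<forall>b\<in>B. norm b = 1" "b0 \<in> B"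
  shows "(\<Sum>b\<in>B. c b *\<^sub>R b) \<bullet> b0 = c b0"
proof -
  have "(\<Sum>b\<in>B. c b *\<^sub>R b) \<bullet> b0 = (\<Sum>b\<in>B. if b = b0 then c b0 else 0)"
    unfolding inner_sum_left using assms(2-4)
    by (intro sum.cong) (auto simp: pairwise_def orthogonal_def norm_eq_1)
  also have "\<dots> = c b0"
    using assms(1,4) by simp
  finally show ?thesis .
qed

lemma eigenbasis_matrix_vector_mult:
  fixes A :: "real^'n^'n"
  assumes "\<forall>b\<in>B. A *v b = (b \<bullet> (A *v b)) *\<^sub>R b" and "u = (\<Sum>b\<in>B. (u \<bullet> b) *\<^sub>R b)"
  shows "A *v u = (\<Sum>b\<in>B. ((b \<bullet> (A *v b)) * (b \<bullet> u)) *\<^sub>R b)"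
proof -
  have "A *v u = (\<Sum>b\<in>B. (u \<bullet> b) *\<^sub>R (A *v b))"
    by (subst assms(2)) (simp add: linear_sum[OF matrix_vector_mul_linear] matrix_vector_mult_scaleR)
  also have "\<dots> = (\<Sum>b\<in>B. ((b \<bullet> (A *v b)) * (b \<bullet> u)) *\<^sub>R b)"
  proof (intro sum.cong refl)
    fix b assume "b \<in> B"
    then have "A *v b = (b \<bullet> (A *v b)) *\<^sub>R b"
      using assms(1) by blast
    then show "(u \<bullet> b) *\<^sub>R (A *v b) = ((b \<bullet> (A *v b)) * (b \<bullet> u)) *\<^sub>R b"
      by (metis inner_commute mult.commute scaleR_scaleR)
  qed
  finally show ?thesis .
qed

lemma outer_mult_vector: "outer (b::real^'n) *v u = (b \<bullet> u) *\<^sub>R b"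
  by (simp add: outer_def vec_eq_iff matrix_vector_mult_def inner_vec_def sum_distrib_left
      algebra_simps)

lemma sum_matrix_vector_mult:
  "finite B \<Longrightarrow> (\<Sum>b\<in>B. M b) *v (u::real^'n) = (\<Sum>b\<in>B. M b *v u)"
  by (induction B rule: finite_induct) (auto simp: matrix_vector_mult_add_rdistrib)

lemma sum_scaleR_outer_mult_vector:
  fixes B :: "(real^'n) set"
  assumes "finite B"
  shows "(\<Sum>b\<in>B. c b *\<^sub>R outer b) *v u = (\<Sum>b\<in>B. (c b * (b \<bullet> u)) *\<^sub>R b)"
  by (simp add: sum_matrix_vector_mult[OF assms] scaleR_matrix_vector_assoc[symmetric]
      outer_mult_vector)

lemma posdef_sum_scaleR_outer:
  fixes B :: "(real^'n) set"
  assumes B: "finite B" "\<forall>u. u = (\<Sum>b\<in>B. (u \<bullet> b) *\<^sub>R b)" and c: "\<forall>b\<in>B. c b > 0"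
  shows "posdef (\<Sum>b\<in>B. c b *\<^sub>R outer b)"
proof -
  let ?S = "\<Sum>b\<in>B. c b *\<^sub>R outer b"
  note Sv = sum_scaleR_outer_mult_vector[OF B(1)]
  have "sym_mat ?S"
    unfolding sym_mat_iff_inner Sv
    by (simp add: inner_sum_left inner_sum_right inner_commute mult.commute mult.left_commute)
  moreover have "u \<bullet> (?S *v u) > 0" if "u \<noteq> 0" for u
  proof -
    obtain b0 where b0: "b0 \<in> B" "b0 \<bullet> u \<noteq> 0"
      using B(2) \<open>u \<noteq> 0\<close> by (metis (no_types, lifting) inner_commute scale_eq_0_iff sum.neutral)
    have "0 < c b0 * (b0 \<bullet> u)\<^sup>2"
      using c b0 by simp
    also have "\<dots> \<le> (\<Sum>b\<in>B. c b * (b \<bullet> u)\<^sup>2)"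
      using b0(1) B(1) c by (intro member_le_sum) (auto simp: less_imp_le)
    also have "\<dots> = u \<bullet> (?S *v u)"
      unfolding Sv by (simp add: inner_sum_right power2_eq_square inner_commute mult.assoc)
    finally show ?thesis .
  qed
  ultimately show ?thesis
    by (simp add: posdef_def)
qed

section \<open>The positive definite square root\<close>

lemma posdef_sqrt_exists:
  fixes C :: "real^'n^'n"
  assumes C: "posdef C"
  shows "\<exists>S. posdef S \<and> S ** S = C"
proof -
  obtain B where B: "finite B" "pairwise orthogonal B" "\<forall>b\<in>B. norm b = 1"
      "\<forall>b\<in>B. C *v b = (b \<bullet> (C *v b)) *\<^sub>R b" "\<forall>u. u = (\<Sum>b\<in>B. (u \<bullet> b) *\<^sub>R b)"
    by (rule sym_mat_eigenbasis[OF posdef_sym[OF C]])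
  define l where "l b = b \<bullet> (C *v b)" for b
  have l_pos: "\<forall>b\<in>B. l b > 0"
    using C B(3) unfolding posdef_def l_def by (metis norm_zero zero_neq_one)
  define S where "S = (\<Sum>b\<in>B. sqrt (l b) *\<^sub>R outer b)"
  have "posdef S"
    unfolding S_def using B(1,5) l_pos by (intro posdef_sum_scaleR_outer) auto
  moreover have "S ** S = C"
    unfolding matrix_eq
  proof
    fix u
    note Sv = sum_scaleR_outer_mult_vector[OF B(1), of "\<lambda>b. sqrt (l b)", folded S_def]
    have "b \<bullet> (S *v u) = sqrt (l b) * (b \<bullet> u)" if "b \<in> B" for b
      unfolding Sv using orthonormal_sum_inner[OF B(1-3) that] by (simp add: inner_commute)
    then have "S *v (S *v u) = (\<Sum>b\<in>B. (l b * (b \<bullet> u)) *\<^sub>R b)"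
      unfolding Sv[of "S *v u"] using l_pos
      by (intro sum.cong) (simp_all add: mult.assoc[symmetric] less_imp_le)
    also have "\<dots> = C *v u"
      unfolding l_def by (rule eigenbasis_matrix_vector_mult[OF B(4) spec[OF B(5)], symmetric])
    finally show "(S ** S) *v u = C *v u"
      by (simp add: matrix_vector_mul_assoc[symmetric])
  qed
  ultimately show ?thesis
    by blast
qed

lemma posdef_sqrt_unique:
  fixes S1 S2 :: "real^'n^'n"
  assumes S1: "posdef S1" and S2: "posdef S2" and eq: "S1 ** S1 = S2 ** S2"
  shows "S1 = S2"
proof -
  define D where "D = S1 - S2"
  have D: "sym_mat D"
    using S1 S2 by (simp add: posdef_def D_def sym_mat_diff)
  obtain B where B: "finite B" "pairwise orthogonal B" "\<forall>b\<in>B. norm b = 1"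
      "\<forall>b\<in>B. D *v b = (b \<bullet> (D *v b)) *\<^sub>R b" "\<forall>u. u = (\<Sum>b\<in>B. (u \<bullet> b) *\<^sub>R b)"
    by (rule sym_mat_eigenbasis[OF D])
  \<comment> \<open>\<open>S\<^sub>1 D + D S\<^sub>2 = S\<^sub>1\<^sup>2 - S\<^sub>2\<^sup>2 = 0\<close>; testing against an eigenvector of \<open>D\<close> with eigenvalue \<open>m\<close>
     gives \<open>m (b\<^sup>T S\<^sub>1 b + b\<^sup>T S\<^sub>2 b) = 0\<close>.\<close>
  have eigenvalue_0: "b \<bullet> (D *v b) = 0" if b: "b \<in> B" for b
  proof -
    define m where "m = b \<bullet> (D *v b)"
    have Db: "D *v b = m *\<^sub>R b"
      using B(4) b m_def by auto
    have "S1 *v (D *v b) + D *v (S2 *v b) = S1 *v (S1 *v b) - S2 *v (S2 *v b)"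
      unfolding D_def by (simp add: matrix_vector_mult_diff_rdistrib matrix_vector_mult_diff_distrib)
    also have "\<dots> = 0"
      by (simp add: matrix_vector_mul_assoc eq)
    finally have "0 = b \<bullet> (S1 *v (D *v b)) + (D *v b) \<bullet> (S2 *v b)"
      using sym_mat_inner[OF D] by (metis inner_add_right inner_zero_right)
    then have "0 = m * (b \<bullet> (S1 *v b) + b \<bullet> (S2 *v b))"
      unfolding Db by (simp add: matrix_vector_mult_scaleR algebra_simps)
    moreover have "b \<noteq> 0"
      using B(3) b by auto
    then have "b \<bullet> (S1 *v b) + b \<bullet> (S2 *v b) > 0"
      using S1 S2 by (simp add: posdef_def add_pos_pos)
    ultimately show ?thesis
      unfolding m_def by simp
  qed
  have "D *v u = 0" for u
    using eigenbasis_matrix_vector_mult[OF B(4) spec[OF B(5)]] eigenvalue_0 by simp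
  then show ?thesis
    by (simp add: D_def matrix_eq matrix_vector_mult_diff_rdistrib)
qed

lemma posdef_mat_sqrt:
  fixes C :: "real^'n^'n"
  assumes "posdef C"
  shows "posdef (mat_sqrt C) \<and> mat_sqrt C ** mat_sqrt C = C"
proof -
  have "\<exists>!S. posdef S \<and> S ** S = C"
    using posdef_sqrt_exists[OF assms] posdef_sqrt_unique by metis
  then show ?thesis
    unfolding mat_sqrt_def by (rule theI')
qed

lemma posdef_matrix_inv:
  fixes S :: "real^'n^'n"
  assumes S: "posdef S"
  shows "S ** matrix_inv S = mat 1" and "matrix_inv S ** S = mat 1"
    and "sym_mat (matrix_inv S)"
proof -
  have "inj ((*v) S)"
  proof (rule injI)
    fix u v assume "S *v u = S *v v"
    then have "(u - v) \<bullet> (S *v (u - v)) = 0"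
      by (simp add: matrix_vector_mult_diff_distrib)
    then show "u = v"
      using S unfolding posdef_def by (metis less_irrefl right_minus_eq)
  qed
  then have "invertible S"
    using matrix_left_invertible_injective invertible_left_inverse by blast
  then show inv: "S ** matrix_inv S = mat 1" "matrix_inv S ** S = mat 1"
    unfolding invertible_def matrix_inv_def by (metis (mono_tags, lifting) someI_ex)+
  have "transpose (matrix_inv S) ** S = mat 1"
    using arg_cong[OF inv(1), of transpose] S
    by (simp add: matrix_transpose_mul posdef_def sym_mat_def)
  then have "transpose (matrix_inv S) = matrix_inv S"
    by (metis inv(1) matrix_mul_assoc matrix_mul_lid matrix_mul_rid)
  then show "sym_mat (matrix_inv S)"
    by (simp add: sym_mat_def)
qed

section \<open>Covariance and the constraint matrix\<close>

lemma cov_quadratic_form: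
  fixes x :: "real^'n^'t"
  shows "(\<Sum>t\<in>UNIV. (u \<bullet> x$t)\<^sup>2) = real CARD('t) * (u \<bullet> (cov x *v u))"
proof -
  have "cov x *v u = (1 / real CARD('t)) *\<^sub>R (\<Sum>t\<in>UNIV. (x$t \<bullet> u) *\<^sub>R x$t)"
    unfolding cov_def
    by (simp add: scaleR_matrix_vector_assoc[symmetric] sum_matrix_vector_mult outer_mult_vector)
  then show ?thesis
    by (simp add: inner_sum_right power2_eq_square inner_commute)
qed

lemma whitened_sum_sq_inner:
  fixes x :: "real^'n^'t"
  assumes "sym_mat Si" and "Si ** cov x ** Si = mat 1"
  shows "(\<Sum>t\<in>UNIV. (c \<bullet> (Si *v x$t))\<^sup>2) = real CARD('t) * (c \<bullet> c)"
proof -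
  have "(\<Sum>t\<in>UNIV. (c \<bullet> (Si *v x$t))\<^sup>2) = (\<Sum>t\<in>UNIV. ((Si *v c) \<bullet> x$t)\<^sup>2)"
    using sym_mat_inner[OF assms(1)] by simp
  also have "\<dots> = real CARD('t) * ((Si *v c) \<bullet> (cov x *v (Si *v c)))"
    by (rule cov_quadratic_form)
  also have "(Si *v c) \<bullet> (cov x *v (Si *v c)) = c \<bullet> ((Si ** cov x ** Si) *v c)"
    using sym_mat_inner[OF assms(1)] by (simp add: matrix_vector_mul_assoc[symmetric])
  finally show ?thesis
    using assms(2) by simp
qed

lemma diag_mat_mult_vector: "(diag_mat g *v z)$i = g$i * z$i"
  by (simp add: matrix_vector_mult_def diag_mat_def if_distrib[of "\<lambda>c. c * _"] cong: if_cong)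

lemma quadratic_form_W_diag_W:
  fixes W :: "real^'k^'n"
  shows "y \<bullet> ((W ** diag_mat g ** transpose W) *v y) = (\<Sum>i\<in>UNIV. g$i * (column i W \<bullet> y)\<^sup>2)"
proof -
  have col: "(transpose W *v y)$i = column i W \<bullet> y" for i
    by (simp add: matrix_vector_mult_def transpose_def column_def inner_vec_def mult.commute)
  have "y \<bullet> ((W ** diag_mat g ** transpose W) *v y)
      = (transpose W *v y) \<bullet> (diag_mat g *v (transpose W *v y))"
    by (metis dot_lmul_matrix matrix_mul_assoc matrix_vector_mul_assoc transpose_matrix_vector)
  also have "\<dots> = (\<Sum>i\<in>UNIV. (transpose W *v y)$i * (diag_mat g *v (transpose W *v y))$i)"
    by (simp only: inner_vec_def inner_real_def)
  also have "\<dots> = (\<Sum>i\<in>UNIV. g$i * (column i W \<bullet> y)\<^sup>2)"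
    by (simp only: col diag_mat_mult_vector power2_eq_square mult.commute mult.left_commute)
  finally show ?thesis .
qed

lemma W_diag_W_eq_sum_outer:
  fixes W :: "real^'k^'n"
  shows "W ** diag_mat g ** transpose W = (\<Sum>i\<in>UNIV. g$i *\<^sub>R outer (column i W))"
proof -
  have "(W ** diag_mat g)$a$k = W$a$k * g$k" for a k
    by (simp add: matrix_matrix_mult_def diag_mat_def if_distrib cong: if_cong)
  then show ?thesis
    by (simp add: vec_eq_iff matrix_matrix_mult_def[of "W ** diag_mat g"] transpose_def
        outer_def column_def mult.commute mult.left_commute)
qed

lemma span_range_eq_sums:
  fixes f :: "'k::finite \<Rightarrow> 'a::real_vector"
  shows "span (range f) = range (\<lambda>g. \<Sum>i\<in>UNIV. g i *\<^sub>R f i)"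
proof
  show "range (\<lambda>g. \<Sum>i\<in>UNIV. g i *\<^sub>R f i) \<subseteq> span (range f)"
    by (auto intro!: span_sum span_mul[OF span_base])
  have "f j \<in> range (\<lambda>g. \<Sum>i\<in>UNIV. g i *\<^sub>R f i)" for j
    by (rule image_eqI[of _ _ "\<lambda>i. if i = j then 1 else 0"])
      (simp_all add: if_distrib[of "\<lambda>c. c *\<^sub>R _"] cong: if_cong)
  moreover have "subspace (range (\<lambda>g. \<Sum>i\<in>UNIV. g i *\<^sub>R f i))"
    unfolding subspace_def
  proof (intro conjI ballI allI)
    show "0 \<in> range (\<lambda>g. \<Sum>i\<in>UNIV. g i *\<^sub>R f i)"
      by (rule image_eqI[of _ _ "\<lambda>_. 0"]) simp_all
    fix a b c
    assume "a \<in> range (\<lambda>g. \<Sum>i\<in>UNIV. g i *\<^sub>R f i)" "b \<in> range (\<lambda>g. \<Sum>i\<in>UNIV. g i *\<^sub>R f i)"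
    then obtain g h where "a = (\<Sum>i\<in>UNIV. g i *\<^sub>R f i)" "b = (\<Sum>i\<in>UNIV. h i *\<^sub>R f i)"
      by blast
    then show "a + b \<in> range (\<lambda>g. \<Sum>i\<in>UNIV. g i *\<^sub>R f i)"
      and "c *\<^sub>R a \<in> range (\<lambda>g. \<Sum>i\<in>UNIV. g i *\<^sub>R f i)"
      by (auto intro: image_eqI[of _ _ "\<lambda>i. g i + h i"] image_eqI[of _ _ "\<lambda>i. c * g i"]
          simp: scaleR_add_left sum.distrib scaleR_sum_right)
  qed
  ultimately show "span (range f) \<subseteq> range (\<lambda>g. \<Sum>i\<in>UNIV. g i *\<^sub>R f i)"
    by (intro span_minimal) auto
qed

lemma exists_diag_gains:
  fixes W :: "real^'k^'n"
  assumes spn: "span ((\<lambda>i. outer (column i W)) ` UNIV) = {A :: real^'n^'n. sym_mat A}"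
    and "sym_mat S"
  shows "\<exists>g. mat 1 + W ** diag_mat g ** transpose W = S"
proof -
  have "S - mat 1 \<in> span ((\<lambda>i. outer (column i W)) ` UNIV)"
    using spn assms(2) by (simp add: sym_mat_diff sym_mat_mat)
  then obtain g where "S - mat 1 = (\<Sum>i\<in>UNIV. g i *\<^sub>R outer (column i W))"
    unfolding span_range_eq_sums by blast
  then have "W ** diag_mat (\<chi> i. g i) ** transpose W = S - mat 1"
    by (simp add: W_diag_W_eq_sum_outer)
  then have "mat 1 + W ** diag_mat (\<chi> i. g i) ** transpose W = S"
    by simp
  then show ?thesis ..
qed

section \<open>The Lagrangian\<close>

lemma lagr_quadratic_form:
  fixes x y :: "real^'n^'t" and W :: "real^'k^'n"
  shows "lagr x W y g = (1 / real CARD('t)) * (\<Sum>t\<in>UNIV. (norm (x$t - y$t))\<^sup>2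
    + y$t \<bullet> ((W ** diag_mat g ** transpose W) *v y$t) - (\<Sum>i\<in>UNIV. g$i))"
  unfolding lagr_def quadratic_form_W_diag_W
  by (simp add: right_diff_distrib sum_subtractf add_diff_eq)

lemma lagr_feasible:
  fixes y :: "real^'n^'t" and W :: "real^'k^'n"
  assumes "\<forall>i. (\<Sum>t\<in>UNIV. (column i W \<bullet> y$t)\<^sup>2) = real CARD('t)"
  shows "lagr x W y g = (1 / real CARD('t)) * (\<Sum>t\<in>UNIV. (norm (x$t - y$t))\<^sup>2)"
proof -
  have "(\<Sum>t\<in>UNIV. \<Sum>i\<in>UNIV. g$i * ((column i W \<bullet> y$t)\<^sup>2 - 1))
     = (\<Sum>i\<in>UNIV. g$i * ((\<Sum>t\<in>UNIV. (column i W \<bullet> y$t)\<^sup>2) - real CARD('t)))"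
    by (subst sum.swap) (simp add: sum_distrib_left right_diff_distrib sum_subtractf mult.commute)
  also have "\<dots> = 0"
    using assms by simp
  finally show ?thesis
    unfolding lagr_def by (simp add: sum.distrib)
qed

definition sum_quad_form :: "real^'n^'n \<Rightarrow> real^'n^'t \<Rightarrow> real" where
  "sum_quad_form S z = (\<Sum>t\<in>UNIV. z$t \<bullet> (S *v z$t))"

lemma sum_quad_form_nonneg: "posdef S \<Longrightarrow> 0 \<le> sum_quad_form S z"
  unfolding sum_quad_form_def by (intro sum_nonneg posdef_nonneg)

lemma sum_quad_form_pos:
  assumes "posdef S" and "z \<noteq> 0"
  shows "0 < sum_quad_form S z"
proof -
  obtain t0 where "z$t0 \<noteq> 0"
    using assms(2) by (metis vec_eq_iff zero_index)
  then have "0 < z$t0 \<bullet> (S *v z$t0)"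
    using assms(1) by (simp add: posdef_def)
  also have "\<dots> \<le> sum_quad_form S z"
    unfolding sum_quad_form_def using assms(1) by (intro member_le_sum posdef_nonneg) auto
  finally show ?thesis .
qed

lemma quad_form_convex_combination:
  fixes S :: "real^'n^'n"
  assumes "sym_mat S"
  shows "u * (p \<bullet> (S *v p)) + (1 - u) * (r \<bullet> (S *v r))
     - (u *\<^sub>R p + (1 - u) *\<^sub>R r) \<bullet> (S *v (u *\<^sub>R p + (1 - u) *\<^sub>R r))
     = u * (1 - u) * ((p - r) \<bullet> (S *v (p - r)))"
proof -
  have "r \<bullet> (S *v p) = p \<bullet> (S *v r)"
    using sym_mat_inner[OF assms, of p r] by (simp add: inner_commute)
  then show ?thesis
    by (simp add: inner_add_left inner_add_right inner_diff_left inner_diff_right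
        matrix_vector_mult_diff_distrib matrix_vector_right_distrib matrix_vector_mult_scaleR
        algebra_simps power2_eq_square)
qed

lemma sum_quad_form_convex_combination:
  assumes "sym_mat S"
  shows "u * sum_quad_form S p + (1 - u) * sum_quad_form S r
     - sum_quad_form S (u *\<^sub>R p + (1 - u) *\<^sub>R r) = u * (1 - u) * sum_quad_form S (p - r)"
  using quad_form_convex_combination[OF assms, of u "p$_" "r$_"]
  by (simp add: sum_quad_form_def sum_distrib_left sum.distrib[symmetric] sum_subtractf[symmetric])

lemma strictly_convex_on_sum_quad_form:
  fixes S :: "real^'n^'n" and z :: "real^'n^'t"
  assumes "posdef S" and "a > 0"
  shows "strictly_convex_on UNIV (\<lambda>y. c + a * sum_quad_form S (y - z))"
  unfolding strictly_convex_on_def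
proof (intro conjI ballI impI allI convex_UNIV)
  fix p r :: "real^'n^'t" and u :: real
  assume "p \<noteq> r" and u: "0 < u \<and> u < 1"
  let ?Q = "sum_quad_form S"
  have "u *\<^sub>R p + (1 - u) *\<^sub>R r - z = u *\<^sub>R (p - z) + (1 - u) *\<^sub>R (r - z)"
    by (simp add: algebra_simps)
  then have "u * ?Q (p - z) + (1 - u) * ?Q (r - z) - ?Q (u *\<^sub>R p + (1 - u) *\<^sub>R r - z)
      = u * (1 - u) * ?Q (p - r)"
    using sum_quad_form_convex_combination[OF posdef_sym[OF assms(1)], of u "p - z" "r - z"]
    by simp
  moreover have "0 < u * (1 - u) * ?Q (p - r)"
    using u sum_quad_form_pos[OF assms(1), of "p - r"] \<open>p \<noteq> r\<close> by simp
  ultimately have "0 < a * (u * ?Q (p - z) + (1 - u) * ?Q (r - z)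
      - ?Q (u *\<^sub>R p + (1 - u) *\<^sub>R r - z))"
    using assms(2) by simp
  then show "c + a * ?Q (u *\<^sub>R p + (1 - u) *\<^sub>R r - z)
      < u * (c + a * ?Q (p - z)) + (1 - u) * (c + a * ?Q (r - z))"
    by (simp add: algebra_simps)
qed

lemma completed_square:
  fixes S :: "real^'n^'n"
  assumes "sym_mat S" and "S *v p = x"
  shows "(norm (x - y))\<^sup>2 + (y \<bullet> (S *v y) - y \<bullet> y)
    = (norm (x - p))\<^sup>2 + (p \<bullet> (S *v p) - p \<bullet> p) + (y - p) \<bullet> (S *v (y - p))"
proof -
  have "p \<bullet> (S *v y) = x \<bullet> y"
    using sym_mat_inner[OF assms(1), of p y] assms(2) by simp
  then show ?thesis
    by (simp add: power2_norm_eq_inner inner_diff_left inner_diff_right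
        matrix_vector_mult_diff_distrib assms(2) inner_commute algebra_simps)
qed

lemma lagr_completed_square:
  fixes x y p :: "real^'n^'t" and W :: "real^'k^'n"
  assumes "sym_mat S" and "mat 1 + W ** diag_mat g ** transpose W = S"
    and "\<forall>t. S *v p$t = x$t"
  shows "lagr x W y g = lagr x W p g + (1 / real CARD('t)) * sum_quad_form S (y - p)"
proof -
  have M: "W ** diag_mat g ** transpose W = S - mat 1"
    using assms(2) by (simp add: eq_diff_eq add.commute)
  have "(norm (x$t - y$t))\<^sup>2 + y$t \<bullet> ((S - mat 1) *v y$t) - (\<Sum>i\<in>UNIV. g$i)
      = ((norm (x$t - p$t))\<^sup>2 + p$t \<bullet> ((S - mat 1) *v p$t) - (\<Sum>i\<in>UNIV. g$i))
        + (y - p)$t \<bullet> (S *v (y - p)$t)" for t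
    using completed_square[OF assms(1) assms(3)[rule_format, of t], of "y$t"]
    by (simp add: matrix_vector_mult_diff_rdistrib inner_diff_right)
  then show ?thesis
    unfolding lagr_quadratic_form M sum_quad_form_def by (simp only: sum.distrib distrib_left)
qed

lemma lagr_unique_minimizer:
  fixes x y p :: "real^'n^'t" and W :: "real^'k^'n"
  assumes "posdef S" and "mat 1 + W ** diag_mat g ** transpose W = S"
    and "\<forall>t. S *v p$t = x$t"
  shows "lagr x W p g \<le> lagr x W y g" and "y \<noteq> p \<Longrightarrow> lagr x W p g < lagr x W y g"
  using lagr_completed_square[OF posdef_sym[OF assms(1)] assms(2,3), of y]
    sum_quad_form_nonneg[OF assms(1), of "y - p"] sum_quad_form_pos[OF assms(1), of "y - p"]
  by simp_all

lemma strictly_convex_on_lagr: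
  fixes x p :: "real^'n^'t" and W :: "real^'k^'n"
  assumes "posdef S" and "mat 1 + W ** diag_mat g ** transpose W = S"
    and "\<forall>t. S *v p$t = x$t"
  shows "strictly_convex_on UNIV (\<lambda>y. lagr x W y g)"
proof -
  have "(\<lambda>y. lagr x W y g)
      = (\<lambda>y. lagr x W p g + (1 / real CARD('t)) * sum_quad_form S (y - p))"
    by (intro ext lagr_completed_square[OF posdef_sym[OF assms(1)] assms(2,3)])
  then show ?thesis
    using strictly_convex_on_sum_quad_form[OF assms(1), where a = "1 / real CARD('t)"
        and c = "lagr x W p g" and z = p]
    by simp
qed

lemma lagr_at_whitened_data:
  fixes x :: "real^'n^'t" and W :: "real^'k^'n"
  assumes "\<forall>i. norm (column i W) = 1" and "sym_mat Si" and "Si ** cov x ** Si = mat 1"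
  shows "lagr x W (\<chi> t. Si *v x$t) g
    = (1 / real CARD('t)) * (\<Sum>t\<in>UNIV. (norm (x$t - Si *v x$t))\<^sup>2)"
proof -
  have "\<forall>i. (\<Sum>t\<in>UNIV. (column i W \<bullet> (\<chi> t. Si *v x$t)$t)\<^sup>2) = real CARD('t)"
    using whitened_sum_sq_inner[OF assms(2,3)] assms(1) by (simp add: norm_eq_1)
  then show ?thesis
    by (simp add: lagr_feasible)
qed

lemma saddle_point_minimax:
  fixes L :: "'a \<Rightarrow> 'b \<Rightarrow> real"
  assumes max: "\<And>b. L a0 b \<le> L a0 b0" and min: "\<And>a. L a0 b0 \<le> L a b0"
  shows "(INF a. SUP b. ereal (L a b)) = ereal (L a0 b0)"
    and "(SUP b. INF a. ereal (L a b)) = ereal (L a0 b0)"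
    and "(SUP b. ereal (L a0 b)) = ereal (L a0 b0)"
    and "(INF a. ereal (L a b0)) = ereal (L a0 b0)"
proof -
  show sup: "(SUP b. ereal (L a0 b)) = ereal (L a0 b0)"
    using max by (intro antisym SUP_least SUP_upper2[of b0]) auto
  show inf: "(INF a. ereal (L a b0)) = ereal (L a0 b0)"
    using min by (intro antisym INF_greatest INF_lower2[of a0]) auto
  show "(INF a. SUP b. ereal (L a b)) = ereal (L a0 b0)"
  proof (intro antisym INF_lower2[of a0] INF_greatest)
    show "ereal (L a0 b0) \<le> (SUP b. ereal (L a b))" for a
      using min by (intro SUP_upper2[of b0]) auto
  qed (simp_all add: sup)
  show "(SUP b. INF a. ereal (L a b)) = ereal (L a0 b0)"
  proof (intro antisym SUP_upper2[of b0] SUP_least)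
    show "(INF a. ereal (L a b)) \<le> ereal (L a0 b0)" for b
      using max by (intro INF_lower2[of a0]) auto
  qed (simp_all add: inf)
qed

theorem mainTheorem4:
  fixes x :: "real^'n^'t" and W :: "real^'k^'n"
  assumes pd: "posdef (cov x)"
    and unit: "\<forall>i. norm (column i W) = 1"
    and spn: "span ((\<lambda>i. outer (column i W)) ` UNIV) = {A :: real^'n^'n. sym_mat A}"
  defines "ystar \<equiv> (\<chi> t. matrix_inv (mat_sqrt (cov x)) *v (x$t))"
  shows "(\<exists>g. mat 1 + W ** diag_mat g ** transpose W = mat_sqrt (cov x))
    \<and> (\<forall>gs. mat 1 + W ** diag_mat gs ** transpose W = mat_sqrt (cov x) \<longrightarrow>
         (\<forall>y g. lagr x W ystar g \<le> lagr x W ystar gs \<and> lagr x W ystar gs \<le> lagr x W y gs)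
       \<and> (INF y. SUP g. ereal (lagr x W y g)) = ereal (lagr x W ystar gs)
       \<and> (SUP g. INF y. ereal (lagr x W y g)) = ereal (lagr x W ystar gs)
       \<and> (SUP g. ereal (lagr x W ystar g)) = ereal (lagr x W ystar gs)
       \<and> (INF y. ereal (lagr x W y gs)) = ereal (lagr x W ystar gs)
       \<and> strictly_convex_on UNIV (\<lambda>y. lagr x W y gs)
       \<and> (\<forall>y. y \<noteq> ystar \<longrightarrow> lagr x W ystar gs < lagr x W y gs))"
proof -
  define S where "S = mat_sqrt (cov x)"
  have S: "posdef S" "S ** S = cov x"
    using posdef_mat_sqrt[OF pd] by (auto simp: S_def)
  note Si = posdef_matrix_inv[OF S(1)]
  have ystar: "ystar = (\<chi> t. matrix_inv S *v x$t)"
    by (simp add: ystar_def S_def)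
  have S_ystar: "\<forall>t. S *v ystar$t = x$t"
    by (simp add: ystar matrix_vector_mul_assoc Si(1))
  have white: "matrix_inv S ** cov x ** matrix_inv S = mat 1"
    by (metis S(2) Si(1,2) matrix_mul_assoc matrix_mul_lid)
  have max: "lagr x W ystar g \<le> lagr x W ystar gs" for g gs
    unfolding ystar lagr_at_whitened_data[OF unit Si(3) white] by simp
  have "(\<forall>y g. lagr x W ystar g \<le> lagr x W ystar gs \<and> lagr x W ystar gs \<le> lagr x W y gs)
       \<and> (INF y. SUP g. ereal (lagr x W y g)) = ereal (lagr x W ystar gs)
       \<and> (SUP g. INF y. ereal (lagr x W y g)) = ereal (lagr x W ystar gs)
       \<and> (SUP g. ereal (lagr x W ystar g)) = ereal (lagr x W ystar gs)
       \<and> (INF y. ereal (lagr x W y gs)) = ereal (lagr x W ystar gs)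
       \<and> strictly_convex_on UNIV (\<lambda>y. lagr x W y gs)
       \<and> (\<forall>y. y \<noteq> ystar \<longrightarrow> lagr x W ystar gs < lagr x W y gs)"
    if gs: "mat 1 + W ** diag_mat gs ** transpose W = S" for gs
  proof -
    note min = lagr_unique_minimizer[OF S(1) gs S_ystar]
    show ?thesis
      using saddle_point_minimax[of "lagr x W" ystar gs, OF max min(1)] min max
        strictly_convex_on_lagr[OF S(1) gs S_ystar]
      by blast
  qed
  then show ?thesis
    using exists_diag_gains[OF spn posdef_sym[OF S(1)]] unfolding S_def by blast
qed

end
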